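(* For integers $M\ge L>N\ge1$, the number of configurations of the four-vertex model on the $L\times M$ grid with scalar-product boundary conditions is $$Z_{L,M,N}=\prod_{j=1}^{N}\frac{(j-1)!\,(M-N+j)!}{(L-N+j-1)!\,(M-L+j)!},$$ which equals the number $\mathrm{PL}(N,L-N,M-L+1)$ of plane partitions fitting in an $N\times(L-N)\times(M-L+1)$ box, where $\mathrm{PL}(r,s,t)=\prod_{i=1}^r\prod_{j=1}^s\prod_{k=1}^t\frac{i+j+k-1}{i+j+k-2}$.
   Context: Four-vertex model: on the grid of vertices $(n,m)$, $1\le n\le L$, $1\le m\le M$ ($n$ increasing rightward, $m$ upward), every edge (including the boundary edges sticking out of the rectangle: $L$ vertical ones on the south and north sides, $M$ horizontal ones on the west and east sides) is thick or thin, such that at every vertex the four incident edges form one of four allowed local configurations: type $a$: all four edges thin; type $b$: both vertical edges thick, both horizontal edges thin; type $c$ (two kinds): south and east edges thick, west and north thin; or west and north edges thick, south and east thin. Scalar-product boundary conditions: the south boundary vertical edges in columns $1,\dots,N$ and the north boundary vertical edges in columns $L-N+1,\dots,L$ are thick; all other boundary edges are thin. *)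

theory Defs
  imports Complex_Main
begin

text \<open>A configuration is a pair (v, h) of edge states
 (True = thick).
 v n m : vertical edge in column n (1 \<le> n \<le> L) between rows m and m+1 (0 \<le> m \<le> M);
         m = 0 are the south boundary edges, m = M the north boundary edges.
 h n m : horizontal edge in row m (1 \<le> m \<le> M) between columns n and n+1 (0 \<le> n \<le> L);
         n = 0 are the west boundary edges, n = L the east boundary edges.
 Outside these index ranges the functions are required to be False (so that
 configurations correspond bijectively to edge colourings).\<close>

definition allowed_vertex :: "bool \<Rightarrow> bool \<Rightarrow> bool \<Rightarrow> bool \<Rightarrow> bool" where
  "allowed_vertex S N W E \<longleftrightarrow>
     (\<not> S \<and> \<not> N \<and> \<not> W \<and> \<not> E)     \<comment> \<open>type a\<close>
   \<or> (S \<and> N \<and> \<not> W \<and> \<not> E)          \<comment> \<open>type b\<close>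
   \<or> (S \<and> E \<and> \<not> W \<and> \<not> N)          \<comment> \<open>type c, first kind\<close>
   \<or> (W \<and> N \<and> \<not> S \<and> \<not> E)"         \<comment> \<open>type c, second kind\<close>

definition four_vertex_configs ::
  "nat \<Rightarrow> nat \<Rightarrow> nat \<Rightarrow> ((nat \<Rightarrow> nat \<Rightarrow> bool) \<times> (nat \<Rightarrow> nat \<Rightarrow> bool)) set" where
  "four_vertex_configs L M N = {(v, h).
     (\<forall>n m. v n m \<longrightarrow> 1 \<le> n \<and> n \<le> L \<and> m \<le> M) \<and>
     (\<forall>n m. h n m \<longrightarrow> n \<le> L \<and> 1 \<le> m \<and> m \<le> M) \<and>
     (\<forall>n\<in>{1..L}. \<forall>m\<in>{1..M}.
        allowed_vertex (v n (m - 1)) (v n m) (h (n - 1) m) (h n m)) \<and>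
     (\<forall>n\<in>{1..L}. v n 0 \<longleftrightarrow> n \<le> N) \<and>
     (\<forall>n\<in>{1..L}. v n M \<longleftrightarrow> L - N + 1 \<le> n) \<and>
     (\<forall>m\<in>{1..M}. \<not> h 0 m \<and> \<not> h L m)}"

definition Z4v :: "nat \<Rightarrow> nat \<Rightarrow> nat \<Rightarrow> nat" where
  "Z4v L M N = card (four_vertex_configs L M N)"

text \<open>Number of plane partitions in an r x s x t box (MacMahon).\<close>
definition PL :: "nat \<Rightarrow> nat \<Rightarrow> nat \<Rightarrow> real" where
  "PL r s t = (\<Prod>i=1..r. \<Prod>j=1..s. \<Prod>k=1..t.
      real (i + j + k - 1) / real (i + j + k - 2))"

end

theory Submission
  imports Defs "Jordan_Normal_Form.Determinant" "HOL-Library.FuncSet"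
begin

text \<open>Reading a configuration column by column, the rows of the thick horizontal edges east of
  column \<open>n\<close> interlace the rows west of it, augmented by a wall at height 0 in the first \<open>N\<close>
  columns (a path enters from the south) and a wall at height \<open>M + 1\<close> in the first \<open>L - N\<close>
  columns (no path leaves to the north); the vertical edges are then forced by flux conservation.
  Attaching staircases of step 2 on both sides turns the walls into genuine entries, so the
  configurations become Gelfand-Tsetlin patterns with one fixed top row. Their number is a
  determinant of binomial coefficients, a Vandermonde product that simplifies to MacMahon's box
  formula.\<close>

section \<open>Binomial determinants\<close>

definition int_choose :: "int \<Rightarrow> nat \<Rightarrow> real" where
  "int_choose t j = of_int t gchoose j"

lemma int_choose_0 [simp]: "int_choose t 0 = 1"
  by (simp add: int_choose_def)

lemma int_choose_Suc_Suc: "int_choose (t + 1) (Suc j) = int_choose t j + int_choose t (Suc j)"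
  unfolding int_choose_def using gbinomial_Suc_Suc[of "of_int t :: real" j] by simp

lemma sum_int_choose_hockey_stick:
  assumes "a < b"
  shows "(\<Sum>t\<in>{a<..<b}. int_choose (t + c) j) = int_choose (b + c) (Suc j) - int_choose (a + 1 + c) (Suc j)"
proof -
  have "a + 1 \<le> b" using assms by simp
  then show ?thesis
  proof (induction b rule: int_ge_induct)
    case base
    have "{a<..<a + 1} = {}" by auto
    then show ?case by simp
  next
    case (step b)
    have "{a<..<b + 1} = insert b {a<..<b}" using step.hyps by auto
    then have "(\<Sum>t\<in>{a<..<b + 1}. int_choose (t + c) j) = int_choose (b + c) j + (\<Sum>t\<in>{a<..<b}. int_choose (t + c) j)"
      by simp
    also have "\<dots> = int_choose (b + 1 + c) (Suc j) - int_choose (a + 1 + c) (Suc j)"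
      using step.IH int_choose_Suc_Suc[of "b + c" j] by (simp add: algebra_simps)
    finally show ?case .
  qed
qed

lemma det_mat_permutes:
  "det (mat r r (\<lambda>(i, j). f i j)) = (\<Sum>p | p permutes {0..<r}. signof p * (\<Prod>i=0..<r. f i (p i)))"
  by (subst det_def'[of _ r]) (auto intro!: sum.cong prod.cong dest: permutes_in_image)

lemma sum_PiE_det_mat:
  fixes F :: "nat \<Rightarrow> 'a \<Rightarrow> nat \<Rightarrow> 'b :: comm_ring_1"
  assumes "\<And>i. i < r \<Longrightarrow> finite (I i)"
  shows "(\<Sum>g\<in>PiE {0..<r} I. det (mat r r (\<lambda>(i, j). F i (g i) j)))
       = det (mat r r (\<lambda>(i, j). \<Sum>t\<in>I i. F i t j))"
proof -
  have "(\<Prod>i=0..<r. \<Sum>t\<in>I i. F i t (p i)) = (\<Sum>g\<in>PiE {0..<r} I. \<Prod>i=0..<r. F i (g i) (p i))" for p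
    by (rule prod_sum_PiE) (use assms in auto)
  then show ?thesis
    unfolding det_mat_permutes[where f = "\<lambda>i j. F i (_ i) j"] det_mat_permutes[where f = "\<lambda>i j. \<Sum>t\<in>I i. F i t j"]
    by (subst sum.swap) (simp add: sum_distrib_left)
qed

lemma det_mat_scale_cols:
  fixes A :: "nat \<Rightarrow> nat \<Rightarrow> 'a :: comm_ring_1"
  shows "det (mat r r (\<lambda>(i, j). c j * A i j)) = (\<Prod>j<r. c j) * det (mat r r (\<lambda>(i, j). A i j))"
proof -
  have "(\<Prod>i=0..<r. c (p i) * A i (p i)) = (\<Prod>j<r. c j) * (\<Prod>i=0..<r. A i (p i))"
    if "p permutes {0..<r}" for p
    using prod.reindex_bij_betw[OF permutes_imp_bij[OF that], of c]
    by (simp add: prod.distrib atLeast0LessThan)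
  then show ?thesis
    unfolding det_mat_permutes[where f = "\<lambda>i j. c j * A i j"] det_mat_permutes[where f = A]
    by (simp add: sum_distrib_left mult.left_commute)
qed

lemma mat_mult_row_differences:
  fixes f :: "nat \<Rightarrow> nat \<Rightarrow> 'a :: comm_ring_1"
  shows "mat n n (\<lambda>(i, k). if i = k then 1 else if Suc k = i then -1 else 0) * mat n n (\<lambda>(k, j). f k j)
       = mat n n (\<lambda>(i, j). if i = 0 then f 0 j else f i j - f (i - 1) j)"
proof (rule eq_matI)
  fix i j assume "i < dim_row (mat n n (\<lambda>(i, j). if i = 0 then f 0 j else f i j - f (i - 1) j))"
    and "j < dim_col (mat n n (\<lambda>(i, j). if i = 0 then f 0 j else f i j - f (i - 1) j))"
  then have i: "i < n" and j: "j < n" by auto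
  have "(mat n n (\<lambda>(i, k). if i = k then 1 else if Suc k = i then -1 else 0) * mat n n (\<lambda>(k, j). f k j)) $$ (i, j)
      = (\<Sum>k<n. (if k = i then f k j else 0) + (if Suc k = i then - f k j else 0))"
    using i j by (auto simp: scalar_prod_def lessThan_atLeast0 intro!: sum.cong)
  also have "\<dots> = (if i = 0 then f 0 j else f i j - f (i - 1) j)"
    using i by (cases i) (auto simp: sum.distrib sum.delta)
  finally show "(mat n n (\<lambda>(i, k). if i = k then 1 else if Suc k = i then -1 else 0) * mat n n (\<lambda>(k, j). f k j)) $$ (i, j)
      = mat n n (\<lambda>(i, j). if i = 0 then f 0 j else f i j - f (i - 1) j) $$ (i, j)"
    using i j by simp
qed auto

lemma det_mat_row_differences:
  fixes f :: "nat \<Rightarrow> nat \<Rightarrow> 'a :: comm_ring_1"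
  assumes "\<And>i. f i 0 = 1"
  shows "det (mat (Suc r) (Suc r) (\<lambda>(i, j). f i j))
       = det (mat r r (\<lambda>(i, j). f (Suc i) (Suc j) - f i (Suc j)))"
proof -
  define D :: "'a mat" where "D = mat (Suc r) (Suc r) (\<lambda>(i, k). if i = k then 1 else if Suc k = i then -1 else 0)"
  define B where "B = mat (Suc r) (Suc r) (\<lambda>(i, j). if i = 0 then f 0 j else f i j - f (i - 1) j)"
  have D: "D \<in> carrier_mat (Suc r) (Suc r)" and B: "B \<in> carrier_mat (Suc r) (Suc r)"
    by (simp_all add: D_def B_def)
  have "det D = prod_list (diag_mat D)"
    by (rule det_lower_triangular[OF _ D]) (auto simp: D_def)
  then have "det D = 1"
    by (simp add: prod_list_diag_prod D_def)
  then have "det (mat (Suc r) (Suc r) (\<lambda>(i, j). f i j)) = det B"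
    using det_mult[OF D, of "mat (Suc r) (Suc r) (\<lambda>(i, j). f i j)"]
    by (simp add: D_def B_def mat_mult_row_differences)
  also have "\<dots> = (\<Sum>i<Suc r. B $$ (i, 0) * cofactor B i 0)"
    by (rule laplace_expansion_column[OF B]) simp
  also have "\<dots> = det (mat_delete B 0 0)"
    by (subst sum.lessThan_Suc_shift) (simp add: B_def assms cofactor_def)
  also have "mat_delete B 0 0 = mat r r (\<lambda>(i, j). f (Suc i) (Suc j) - f i (Suc j))"
    by (rule eq_matI) (auto simp: mat_delete_def B_def insert_index_def)
  finally show ?thesis .
qed

lemma det_mat_monic_basis:
  fixes q :: "nat \<Rightarrow> 'a :: comm_ring_1 poly"
  assumes deg: "\<And>j. j < r \<Longrightarrow> degree (q j) = j" and lead: "\<And>j. j < r \<Longrightarrow> coeff (q j) j = 1"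
  shows "det (mat r r (\<lambda>(i, j). poly (q j) (y i))) = det (mat r r (\<lambda>(i, j). y i ^ j))"
proof -
  define V where "V = mat r r (\<lambda>(i, k). y i ^ k)"
  define C where "C = mat r r (\<lambda>(k, j). coeff (q j) k)"
  have V: "V \<in> carrier_mat r r" and C: "C \<in> carrier_mat r r" by (simp_all add: V_def C_def)
  have "V * C = mat r r (\<lambda>(i, j). poly (q j) (y i))"
  proof (rule eq_matI)
    fix i j assume "i < dim_row (mat r r (\<lambda>(i, j). poly (q j) (y i)))" "j < dim_col (mat r r (\<lambda>(i, j). poly (q j) (y i)))"
    then have i: "i < r" and j: "j < r" by auto
    have "(V * C) $$ (i, j) = (\<Sum>k<r. coeff (q j) k * y i ^ k)"
      using i j by (simp add: V_def C_def scalar_prod_def lessThan_atLeast0 mult.commute)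
    also have "\<dots> = poly (q j) (y i)"
      unfolding poly_altdef using deg[OF j] j
      by (intro sum.mono_neutral_right) (auto simp: coeff_eq_0)
    finally show "(V * C) $$ (i, j) = mat r r (\<lambda>(i, j). poly (q j) (y i)) $$ (i, j)" using i j by simp
  qed (simp_all add: V_def C_def)
  moreover have "det C = 1"
  proof -
    have "det C = prod_list (diag_mat C)"
      by (rule det_upper_triangular[OF _ C]) (auto simp: C_def coeff_eq_0 deg)
    then show ?thesis by (simp add: prod_list_diag_prod C_def lead)
  qed
  ultimately show ?thesis using det_mult[OF V C] by (simp add: V_def)
qed

lemma degree_coeff_prod_monic_linear:
  fixes a :: "nat \<Rightarrow> 'a :: idom"
  shows "degree (\<Prod>k<j. [:- a k, 1:]) = j \<and> coeff (\<Prod>k<j. [:- a k, 1:]) j = 1"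
proof (induction j)
  case (Suc j)
  let ?p = "\<Prod>k<j. [:- a k, 1:]"
  have "?p \<noteq> 0" using Suc by auto
  then have "degree (?p * [:- a j, 1:]) = Suc j" using Suc by (subst degree_mult_eq) auto
  moreover have "lead_coeff (?p * [:- a j, 1:]) = 1" using Suc by (simp only: lead_coeff_mult) simp
  ultimately show ?case by simp
qed simp

lemma det_vandermonde:
  fixes y :: "nat \<Rightarrow> 'a :: idom"
  shows "det (mat r r (\<lambda>(i, j). y i ^ j)) = (\<Prod>i<r. \<Prod>k<i. y i - y k)"
proof -
  define q where "q j = (\<Prod>k<j. [:- y k, 1:])" for j
  have "det (mat r r (\<lambda>(i, j). y i ^ j)) = det (mat r r (\<lambda>(i, j). poly (q j) (y i)))"
    by (rule det_mat_monic_basis[symmetric]) (use degree_coeff_prod_monic_linear in \<open>auto simp: q_def\<close>)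
  also have "\<dots> = prod_list (diag_mat (mat r r (\<lambda>(i, j). poly (q j) (y i))))"
  proof (rule det_lower_triangular)
    fix i j assume "i < j" "j < r"
    then show "mat r r (\<lambda>(i, j). poly (q j) (y i)) $$ (i, j) = 0"
      by (auto simp: q_def poly_prod intro!: prod_zero bexI[of _ i])
  qed auto
  also have "\<dots> = (\<Prod>i<r. \<Prod>k<i. y i - y k)"
    by (simp add: prod_list_diag_prod q_def poly_prod atLeast0LessThan)
  finally show ?thesis .
qed

lemma det_int_choose:
  fixes X :: "nat \<Rightarrow> int"
  shows "det (mat r r (\<lambda>(i, j). int_choose (X i) j))
       = (\<Prod>i<r. \<Prod>k<i. of_int (X i - X k)) / (\<Prod>j<r. fact j)"
proof -
  define q :: "nat \<Rightarrow> real poly" where "q j = (\<Prod>k<j. [:- of_nat k, 1:])" for j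
  have "int_choose t j = 1 / fact j * poly (q j) (of_int t)" for t j
    unfolding int_choose_def gbinomial_prod_rev q_def by (simp add: poly_prod atLeast0LessThan)
  then have "det (mat r r (\<lambda>(i, j). int_choose (X i) j))
      = (\<Prod>j<r. 1 / fact j) * det (mat r r (\<lambda>(i, j). poly (q j) (of_int (X i))))"
    using det_mat_scale_cols[where c = "\<lambda>j. 1 / fact j" and A = "\<lambda>i j. poly (q j) (of_int (X i))"] by simp
  also have "det (mat r r (\<lambda>(i, j). poly (q j) (of_int (X i)))) = det (mat r r (\<lambda>(i, j). (of_int (X i) :: real) ^ j))"
    by (rule det_mat_monic_basis) (use degree_coeff_prod_monic_linear in \<open>auto simp: q_def\<close>)
  finally show ?thesis by (simp add: det_vandermonde prod_dividef)
qed

section \<open>Interlacing sequences and Gelfand-Tsetlin patterns\<close>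

definition interlacings :: "int list \<Rightarrow> int list set" where
  "interlacings x = {y. length y + 1 = length x \<and> (\<forall>i<length y. x ! i < y ! i \<and> y ! i < x ! Suc i)}"

lemma length_interlacings: "y \<in> interlacings x \<Longrightarrow> length y + 1 = length x"
  unfolding interlacings_def by auto

lemma finite_interlacings: "finite (interlacings x)"
proof -
  define B where "B = sum_list (map abs x)"
  have bound: "\<bar>x ! k\<bar> \<le> B" if "k < length x" for k
    unfolding B_def using that by (intro member_le_sum_list) auto
  have "interlacings x \<subseteq> {y. set y \<subseteq> {-B..B} \<and> length y = length x - 1}"
  proof
    fix y assume y: "y \<in> interlacings x"
    then have "y ! i \<in> {-B..B}" if "i < length y" for i
      using that bound[of i] bound[of "Suc i"] unfolding interlacings_def by fastforce
    then show "y \<in> {y. set y \<subseteq> {-B..B} \<and> length y = length x - 1}"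
      using length_interlacings[OF y] by (auto simp: in_set_conv_nth)
  qed
  moreover have "finite {y. set y \<subseteq> {-B..B} \<and> length y = length x - 1}"
    by (rule finite_lists_length_eq) simp
  ultimately show ?thesis by (rule finite_subset)
qed

lemma interlacings_sorted:
  assumes "y \<in> interlacings x"
  shows "sorted_wrt (<) y"
proof -
  have "y ! i < y ! Suc i" if "Suc i < length y" for i
  proof -
    have "y ! i < x ! Suc i" "x ! Suc i < y ! Suc i"
      using assms that unfolding interlacings_def by auto
    then show ?thesis by simp
  qed
  then show ?thesis by (simp add: sorted_wrt_iff_nth_Suc_transp)
qed

lemma interlacings_append:
  "interlacings (x @ a # z) = {w @ u | w u. w \<in> interlacings (x @ [a]) \<and> u \<in> interlacings (a # z)}"
proof (rule Set.set_eqI, rule iffI)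
  fix y assume y: "y \<in> interlacings (x @ a # z)"
  then have len: "length y = length x + length z"
    and between: "\<And>i. i < length y \<Longrightarrow> (x @ a # z) ! i < y ! i \<and> y ! i < (x @ a # z) ! Suc i"
    unfolding interlacings_def by auto
  have "take (length x) y \<in> interlacings (x @ [a])"
    unfolding interlacings_def
  proof (intro CollectI conjI allI impI)
    fix i assume "i < length (take (length x) y)"
    then show "(x @ [a]) ! i < take (length x) y ! i" "take (length x) y ! i < (x @ [a]) ! Suc i"
      using between[of i] len by (auto simp: nth_append)
  qed (use len in simp)
  moreover have "drop (length x) y \<in> interlacings (a # z)"
    unfolding interlacings_def
  proof (intro CollectI conjI allI impI)
    fix i assume "i < length (drop (length x) y)"
    then show "(a # z) ! i < drop (length x) y ! i" "drop (length x) y ! i < (a # z) ! Suc i"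
      using between[of "length x + i"] len by (auto simp: nth_append)
  qed (use len in simp)
  ultimately show "y \<in> {w @ u | w u. w \<in> interlacings (x @ [a]) \<and> u \<in> interlacings (a # z)}"
    by (metis (mono_tags, lifting) append_take_drop_id mem_Collect_eq)
next
  fix y assume "y \<in> {w @ u | w u. w \<in> interlacings (x @ [a]) \<and> u \<in> interlacings (a # z)}"
  then obtain w u where y: "y = w @ u" and w: "w \<in> interlacings (x @ [a])" and u: "u \<in> interlacings (a # z)"
    by blast
  have lw: "length w = length x" and lu: "length u = length z"
    using length_interlacings[OF w] length_interlacings[OF u] by simp_all
  have "(x @ a # z) ! i < y ! i \<and> y ! i < (x @ a # z) ! Suc i" if i: "i < length y" for i
  proof (cases "i < length x")
    case True
    then show ?thesis using w lw unfolding y interlacings_def by (auto simp: nth_append)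
  next
    case False
    then obtain k where "i = length x + k" "k < length z"
      using i lw lu y by (metis add_diff_inverse_nat length_append nat_add_left_cancel_less)
    then show ?thesis using u lw unfolding y interlacings_def by (auto simp: nth_append)
  qed
  then show "y \<in> interlacings (x @ a # z)"
    unfolding interlacings_def using lw lu y by simp
qed

lemma interlacings_pair: "interlacings [a, b] = {[y] | y. a < y \<and> y < b}"
  unfolding interlacings_def by (auto simp: length_Suc_conv)

text \<open>Counts the Gelfand-Tsetlin patterns with top row \<open>x\<close>; the depth argument, which is \<open>length x\<close>,
  only serves primitive recursion.\<close>

primrec gt_count_depth :: "nat \<Rightarrow> int list \<Rightarrow> nat" where
  "gt_count_depth 0 x = 1"
| "gt_count_depth (Suc n) x = (\<Sum>y\<in>interlacings x. gt_count_depth n y)"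

definition gt_count :: "int list \<Rightarrow> nat" where
  "gt_count x = gt_count_depth (length x) x"

lemma gt_count_Nil [simp]: "gt_count [] = 1"
  by (simp add: gt_count_def)

lemma gt_count_rec:
  assumes "x \<noteq> []"
  shows "gt_count x = (\<Sum>y\<in>interlacings x. gt_count y)"
proof -
  obtain n where n: "length x = Suc n" using assms by (cases x) auto
  then have "gt_count x = (\<Sum>y\<in>interlacings x. gt_count_depth n y)"
    by (simp add: gt_count_def)
  also have "\<dots> = (\<Sum>y\<in>interlacings x. gt_count y)"
    using n length_interlacings by (intro sum.cong) (fastforce simp: gt_count_def)+
  finally show ?thesis .
qed

lemma gt_count_eq_0: "x \<noteq> [] \<Longrightarrow> interlacings x = {} \<Longrightarrow> gt_count x = 0"
  by (simp add: gt_count_rec)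

definition gt_det :: "int list \<Rightarrow> real" where
  "gt_det x = det (mat (length x) (length x) (\<lambda>(i, j). int_choose (x ! i - int i + int (length x)) j))"

lemma sum_interlacings_PiE:
  assumes "length x = Suc r"
  shows "(\<Sum>y\<in>interlacings x. h y) = (\<Sum>g\<in>PiE {0..<r} (\<lambda>i. {x ! i<..<x ! Suc i}). h (map g [0..<r]))"
proof (rule sum.reindex_bij_witness[where i = "\<lambda>g. map g [0..<r]" and j = "\<lambda>y. restrict ((!) y) {0..<r}"])
  fix y assume y: "y \<in> interlacings x"
  then have ly: "length y = r" using assms length_interlacings by fastforce
  show "map (restrict ((!) y) {0..<r}) [0..<r] = y"
    by (rule nth_equalityI) (auto simp: ly)
  then show "h (map (restrict ((!) y) {0..<r}) [0..<r]) = h y" by simp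
  show "restrict ((!) y) {0..<r} \<in> PiE {0..<r} (\<lambda>i. {x ! i<..<x ! Suc i})"
    using y ly unfolding interlacings_def by auto
next
  fix g assume g: "g \<in> PiE {0..<r} (\<lambda>i. {x ! i<..<x ! Suc i})"
  then show "restrict ((!) (map g [0..<r])) {0..<r} = g"
    by (auto simp: PiE_def extensional_def fun_eq_iff)
  show "map g [0..<r] \<in> interlacings x"
    using g assms unfolding interlacings_def by auto
qed

text \<open>Summing the rows of a pattern telescopes: each entry ranges over an interval, on which the
  binomial entries sum by the hockey-stick identity to row differences of the next larger matrix.\<close>

lemma sum_interlacings_gt_det:
  assumes sorted: "sorted_wrt (<) x" and len: "length x = Suc r"
  shows "(\<Sum>y\<in>interlacings x. gt_det y) = gt_det x"
proof -
  have gaps: "x ! i < x ! Suc i" if "i < r" for i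
    using sorted len that by (simp add: sorted_wrt_iff_nth_less)
  have hockey: "(\<Sum>t\<in>{x ! i<..<x ! Suc i}. int_choose (t + (int r - int i)) j)
      = int_choose (x ! Suc i - int (Suc i) + int (Suc r)) (Suc j) - int_choose (x ! i - int i + int (Suc r)) (Suc j)"
    if "i < r" for i j
    using sum_int_choose_hockey_stick[OF gaps[OF that], of "int r - int i" j] by (simp add: algebra_simps)
  have "(\<Sum>y\<in>interlacings x. gt_det y)
      = (\<Sum>g\<in>PiE {0..<r} (\<lambda>i. {x ! i<..<x ! Suc i}). det (mat r r (\<lambda>(i, j). int_choose (g i - int i + int r) j)))"
    unfolding sum_interlacings_PiE[OF len] gt_det_def
    by (intro sum.cong refl arg_cong[where f = det] cong_mat) auto
  also have "\<dots> = det (mat r r (\<lambda>(i, j). \<Sum>t\<in>{x ! i<..<x ! Suc i}. int_choose (t + (int r - int i)) j))"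
    by (subst sum_PiE_det_mat) (simp_all add: algebra_simps)
  also have "\<dots> = det (mat r r (\<lambda>(i, j). int_choose (x ! Suc i - int (Suc i) + int (Suc r)) (Suc j)
                                       - int_choose (x ! i - int i + int (Suc r)) (Suc j)))"
    using hockey by (intro arg_cong[where f = det] cong_mat) auto
  also have "\<dots> = gt_det x"
    unfolding gt_det_def len by (rule det_mat_row_differences[symmetric]) simp
  finally show ?thesis .
qed

lemma gt_count_eq_gt_det: "sorted_wrt (<) x \<Longrightarrow> real (gt_count x) = gt_det x"
proof (induction "length x" arbitrary: x)
  case 0
  then show ?case by (simp add: gt_det_def)
next
  case (Suc r x)
  then have "real (gt_count x) = (\<Sum>y\<in>interlacings x. real (gt_count y))"
    by (subst gt_count_rec) auto
  also have "\<dots> = (\<Sum>y\<in>interlacings x. gt_det y)"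
    using Suc length_interlacings interlacings_sorted by (intro sum.cong) fastforce+
  also have "\<dots> = gt_det x"
    using Suc by (intro sum_interlacings_gt_det[where r = r]) simp_all
  finally show ?case .
qed

lemma gt_count_formula:
  assumes "sorted_wrt (<) x"
  shows "real (gt_count x)
       = (\<Prod>i<length x. \<Prod>k<i. of_int ((x ! i - int i) - (x ! k - int k))) / (\<Prod>j<length x. fact j)"
  unfolding gt_count_eq_gt_det[OF assms] gt_det_def det_int_choose by simp

section \<open>Walls and frozen staircases\<close>

lemma interlacings_gap2: "interlacings [a, a + 2] = {[a + 1]}"
proof -
  have "{[y] | y. a < y \<and> y < a + 2} = {[a + 1]}" by auto
  then show ?thesis by (simp add: interlacings_pair)
qed

lemma interlacings_Cons_gap2: "interlacings (a # (a + 2) # z) = (\<lambda>w. (a + 1) # w) ` interlacings ((a + 2) # z)"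
  using interlacings_append[of "[a]" "a + 2" z] by (simp add: interlacings_gap2 Setcompr_eq_image)

lemma interlacings_snoc_gap2: "interlacings (x @ [a, a + 2]) = (\<lambda>w. w @ [a + 1]) ` interlacings (x @ [a])"
  using interlacings_append[of x a "[a + 2]"] by (simp add: interlacings_gap2 Setcompr_eq_image)

text \<open>Gaps of width 2 leave a single choice for every interlacing entry, so a staircase of step 2
  reproduces itself, one entry shorter and shifted by 1.\<close>

lemma interlacings_staircase_append:
  "interlacings (map (\<lambda>i. c + 2 * int i) [0..<Suc s] @ z)
   = (\<lambda>w. map (\<lambda>i. c + 1 + 2 * int i) [0..<s] @ w) ` interlacings ((c + 2 * int s) # z)"
proof (induction s arbitrary: c)
  case (Suc s)
  have shift: "map (\<lambda>i. c + 2 * int i) [0..<Suc (Suc s)] = c # map (\<lambda>i. (c + 2) + 2 * int i) [0..<Suc s]"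
    "map (\<lambda>i. c + 1 + 2 * int i) [0..<Suc s] = (c + 1) # map (\<lambda>i. (c + 2) + 1 + 2 * int i) [0..<s]"
    "map (\<lambda>i. (c + 2) + 2 * int i) [0..<Suc s] = (c + 2) # map (\<lambda>i. (c + 4) + 2 * int i) [0..<s]"
    by (subst upt_conv_Cons; auto simp: map_Suc_upt[symmetric] algebra_simps simp del: upt_Suc)+
  have "interlacings (map (\<lambda>i. c + 2 * int i) [0..<Suc (Suc s)] @ z)
      = (\<lambda>w. (c + 1) # w) ` interlacings (map (\<lambda>i. (c + 2) + 2 * int i) [0..<Suc s] @ z)"
    unfolding shift(1) using interlacings_Cons_gap2 shift(3) by simp
  also have "\<dots> = (\<lambda>w. (c + 1) # map (\<lambda>i. (c + 2) + 1 + 2 * int i) [0..<s] @ w) ` interlacings ((c + 2 + 2 * int s) # z)"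
    unfolding Suc.IH image_image by simp
  finally show ?case unfolding shift(2) by (simp add: algebra_simps)
qed simp

lemma interlacings_append_staircase:
  "interlacings (z @ map (\<lambda>k. d + 2 * int k) [0..<Suc t])
   = (\<lambda>w. w @ map (\<lambda>k. d + 1 + 2 * int k) [0..<t]) ` interlacings (z @ [d])"
proof (induction t)
  case (Suc t)
  have "interlacings (z @ map (\<lambda>k. d + 2 * int k) [0..<Suc (Suc t)])
     = (\<lambda>w. w @ [d + 2 * int t + 1]) ` interlacings (z @ map (\<lambda>k. d + 2 * int k) [0..<Suc t])"
    using interlacings_snoc_gap2[of "z @ map (\<lambda>k. d + 2 * int k) [0..<t]" "d + 2 * int t"]
    by (simp add: algebra_simps)
  then show ?case unfolding Suc.IH by (simp add: image_image algebra_simps)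
qed simp

text \<open>Columns \<open>n \<le> N\<close> receive a path from the south, which acts as an extra row at height 0;
  columns \<open>n \<le> K\<close> do not emit a path to the north, which acts as an extra row at height \<open>M + 1\<close>.\<close>

definition walled :: "nat \<Rightarrow> nat \<Rightarrow> nat \<Rightarrow> nat \<Rightarrow> int list \<Rightarrow> int list" where
  "walled N K M n a = (if n \<le> N then [0] else []) @ a @ (if n \<le> K then [int M + 1] else [])"

definition tight_walled :: "nat \<Rightarrow> nat \<Rightarrow> nat \<Rightarrow> nat \<Rightarrow> int list \<Rightarrow> int list" where
  "tight_walled N K M n a =
     (if n \<le> N then [int (N - n)] else []) @ a @ (if n \<le> K then [int M - int (K - n) + 1] else [])"

definition low_staircase :: "nat \<Rightarrow> int list" where
  "low_staircase s = map (\<lambda>i. 2 * int i - int s + 1) [0..<s]"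

definition high_staircase :: "nat \<Rightarrow> nat \<Rightarrow> int list" where
  "high_staircase M t = map (\<lambda>k. int M - int t + 2 + 2 * int k) [0..<t]"

text \<open>The walls become genuine entries of a single top row once the staircases carrying them are
  attached on both sides; after \<open>N\<close> resp. \<open>K\<close> steps the staircases are used up.\<close>

definition frozen_row :: "nat \<Rightarrow> nat \<Rightarrow> nat \<Rightarrow> nat \<Rightarrow> int list \<Rightarrow> int list" where
  "frozen_row N K M n a = low_staircase (N - n) @ a @ high_staircase M (K - n)"

lemma interlacings_low_staircase:
  "interlacings (low_staircase (N - n) @ z)
   = (\<lambda>w. low_staircase (N - Suc n) @ w) ` interlacings ((if Suc n \<le> N then [int (N - Suc n)] else []) @ z)"
proof (cases "n < N")
  case True
  define s where "s = N - Suc n"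
  have "low_staircase (N - n) = map (\<lambda>i. - int s + 2 * int i) [0..<Suc s]"
    "low_staircase (N - Suc n) = map (\<lambda>i. - int s + 1 + 2 * int i) [0..<s]"
    using True by (simp_all add: low_staircase_def s_def Suc_diff_Suc algebra_simps)
  then show ?thesis
    using True interlacings_staircase_append[of "- int s" s z] by (simp add: s_def algebra_simps)
qed (simp add: low_staircase_def)

lemma interlacings_high_staircase:
  "interlacings (z @ high_staircase M (K - n))
   = (\<lambda>w. w @ high_staircase M (K - Suc n)) ` interlacings (z @ (if Suc n \<le> K then [int M - int (K - Suc n) + 1] else []))"
proof (cases "n < K")
  case True
  define t where "t = K - Suc n"
  have "high_staircase M (K - n) = map (\<lambda>k. (int M - int t + 1) + 2 * int k) [0..<Suc t]"
    "high_staircase M (K - Suc n) = map (\<lambda>k. (int M - int t + 1) + 1 + 2 * int k) [0..<t]"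
    using True by (simp_all add: high_staircase_def t_def Suc_diff_Suc algebra_simps)
  then show ?thesis
    using True interlacings_append_staircase[of z "int M - int t + 1" t] by (simp add: t_def)
qed (simp add: high_staircase_def)

lemma interlacings_frozen_row:
  "interlacings (frozen_row N K M n a) = frozen_row N K M (Suc n) ` interlacings (tight_walled N K M (Suc n) a)"
  unfolding frozen_row_def interlacings_low_staircase
  using interlacings_high_staircase[of "(if Suc n \<le> N then [int (N - Suc n)] else []) @ a"]
  by (simp add: image_image tight_walled_def)

lemma interlacings_eq_empty_if_no_gap:
  assumes "Suc i < length x" "x ! Suc i \<le> x ! i + 1"
  shows "interlacings x = {}"
proof -
  have False if "y \<in> interlacings x" for y
  proof -
    have "x ! i < y ! i" "y ! i < x ! Suc i" using that assms(1) unfolding interlacings_def by auto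
    with assms(2) show False by linarith
  qed
  then show ?thesis by blast
qed

lemma interlacings_low_staircase_blocked:
  assumes "w \<noteq> []" "hd w \<le> int (Suc s)"
  shows "interlacings (low_staircase (Suc s) @ w @ z) = {}"
proof (rule interlacings_eq_empty_if_no_gap[of s])
  have "(low_staircase (Suc s) @ w @ z) ! s = int s"
    by (simp add: low_staircase_def nth_append del: upt_Suc)
  moreover have "(low_staircase (Suc s) @ w @ z) ! Suc s = hd w"
    using assms(1) by (simp add: low_staircase_def nth_append hd_conv_nth)
  ultimately show "(low_staircase (Suc s) @ w @ z) ! Suc s \<le> (low_staircase (Suc s) @ w @ z) ! s + 1"
    using assms(2) by simp
qed (use assms(1) in \<open>simp add: low_staircase_def\<close>)

lemma interlacings_high_staircase_blocked:
  assumes "w \<noteq> []" "0 < t" "int M - int t + 1 \<le> last w"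
  shows "interlacings (z @ w @ high_staircase M t) = {}"
proof (rule interlacings_eq_empty_if_no_gap[of "length z + (length w - 1)"])
  have "(z @ w @ high_staircase M t) ! (length z + (length w - 1)) = last w"
    using assms(1) by (simp add: nth_append last_conv_nth)
  moreover have "(z @ w @ high_staircase M t) ! Suc (length z + (length w - 1)) = int M - int t + 2"
    using assms(1,2) by (simp add: nth_append high_staircase_def)
  ultimately show "(z @ w @ high_staircase M t) ! Suc (length z + (length w - 1))
      \<le> (z @ w @ high_staircase M t) ! (length z + (length w - 1)) + 1"
    using assms(3) by simp
qed (use assms in \<open>simp add: high_staircase_def\<close>)

lemma interlacings_mono:
  assumes "length x' = length x"
    and "\<And>i. Suc i < length x \<Longrightarrow> x ! i \<le> x' ! i"
    and "\<And>i. 0 < i \<Longrightarrow> i < length x \<Longrightarrow> x' ! i \<le> x ! i"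
  shows "interlacings x' \<subseteq> interlacings x"
proof
  fix y assume "y \<in> interlacings x'"
  then have ly: "length y + 1 = length x'" and between: "\<And>i. i < length y \<Longrightarrow> x' ! i < y ! i \<and> y ! i < x' ! Suc i"
    unfolding interlacings_def by auto
  show "y \<in> interlacings x"
    unfolding interlacings_def
  proof (intro CollectI conjI allI impI)
    fix i assume i: "i < length y"
    show "x ! i < y ! i" using between[OF i] assms(2)[of i] i ly assms(1) by fastforce
    show "y ! i < x ! Suc i" using between[OF i] assms(3)[of "Suc i"] i ly assms(1) by fastforce
  qed (use ly assms(1) in simp)
qed

lemma length_tight_walled: "length (tight_walled N K M n a) = length (walled N K M n a)"
  by (simp add: walled_def tight_walled_def)

lemma interlacings_tight_walled_subset:
  "interlacings (tight_walled N K M n a) \<subseteq> interlacings (walled N K M n a)"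
proof (rule interlacings_mono[OF length_tight_walled])
  show "walled N K M n a ! i \<le> tight_walled N K M n a ! i" if "Suc i < length (walled N K M n a)" for i
    using that unfolding walled_def tight_walled_def by (cases i) (auto simp: nth_append nth_Cons')
  show "tight_walled N K M n a ! i \<le> walled N K M n a ! i" if "0 < i" "i < length (walled N K M n a)" for i
    using that unfolding walled_def tight_walled_def by (auto simp: nth_append nth_Cons')
qed

lemma tight_walled_nth_differ_low:
  assumes "Suc i < length (walled N K M n a)" "tight_walled N K M n a ! i \<noteq> walled N K M n a ! i"
  shows "i = 0 \<and> n \<le> N \<and> tight_walled N K M n a ! i = int (N - n)"
  using assms unfolding walled_def tight_walled_def
  by (cases i) (auto simp: nth_append nth_Cons' split: if_splits)

lemma tight_walled_nth_differ_high:
  assumes "0 < i" "i < length (walled N K M n a)" "tight_walled N K M n a ! i \<noteq> walled N K M n a ! i"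
  shows "Suc i = length (walled N K M n a) \<and> n \<le> K \<and> tight_walled N K M n a ! i = int M - int (K - n) + 1"
  using assms unfolding walled_def tight_walled_def
  by (auto simp: nth_append nth_Cons' split: if_splits)

lemma gt_count_frozen_row_loose:
  assumes w: "w \<in> interlacings (walled N K M (Suc n) a)"
    and not_tight: "w \<notin> interlacings (tight_walled N K M (Suc n) a)"
  shows "gt_count (frozen_row N K M (Suc n) w) = 0"
proof -
  let ?x = "walled N K M (Suc n) a" and ?x' = "tight_walled N K M (Suc n) a"
  have lw: "length w + 1 = length ?x" and between: "\<And>i. i < length w \<Longrightarrow> ?x ! i < w ! i \<and> w ! i < ?x ! Suc i"
    using w unfolding interlacings_def by auto
  obtain i where i: "i < length w" and bad: "\<not> (?x' ! i < w ! i \<and> w ! i < ?x' ! Suc i)"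
    using not_tight lw length_tight_walled[of N K M "Suc n" a] unfolding interlacings_def by auto
  then have w_ne: "w \<noteq> []" by auto
  have "interlacings (frozen_row N K M (Suc n) w) = {}"
  proof (cases "?x' ! i < w ! i")
    case False
    then have differ: "?x' ! i \<noteq> ?x ! i" using between[OF i] by auto
    then have low: "i = 0" "Suc n \<le> N" "?x' ! i = int (N - Suc n)"
      using tight_walled_nth_differ_low[of i N K M "Suc n" a] i lw by auto
    moreover have "?x ! i = 0" using low by (simp add: walled_def)
    ultimately obtain s where s: "N - Suc n = Suc s" using differ by (cases "N - Suc n") auto
    have "hd w \<le> int (Suc s)" using False low s w_ne by (simp add: hd_conv_nth)
    then show ?thesis
      unfolding frozen_row_def s by (rule interlacings_low_staircase_blocked[OF w_ne])
  next
    case True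
    then have below: "\<not> w ! i < ?x' ! Suc i" using bad by simp
    then have differ: "?x' ! Suc i \<noteq> ?x ! Suc i" using between[OF i] by auto
    then have high: "Suc (Suc i) = length ?x" "Suc n \<le> K" "?x' ! Suc i = int M - int (K - Suc n) + 1"
      using tight_walled_nth_differ_high[of "Suc i" N K M "Suc n" a] i lw by auto
    moreover have "?x ! Suc i = int M + 1" using high by (simp add: walled_def nth_append split: if_splits)
    ultimately have "0 < K - Suc n" using differ by (cases "K - Suc n") auto
    moreover have "length w = Suc i" using high(1) lw by linarith
    then have "last w = w ! i" using w_ne by (simp add: last_conv_nth)
    then have "int M - int (K - Suc n) + 1 \<le> last w" using below high(3) by simp
    ultimately show ?thesis
      unfolding frozen_row_def by (intro interlacings_high_staircase_blocked[OF w_ne])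
  qed
  then show ?thesis
    using w_ne by (intro gt_count_eq_0) (simp_all add: frozen_row_def)
qed

lemma sum_gt_count_frozen_row:
  assumes "frozen_row N K M n a \<noteq> []"
  shows "(\<Sum>b\<in>interlacings (walled N K M (Suc n) a). gt_count (frozen_row N K M (Suc n) b))
       = gt_count (frozen_row N K M n a)"
proof -
  have inj: "inj_on (frozen_row N K M (Suc n)) X" for X
    by (rule inj_onI) (simp add: frozen_row_def)
  have "gt_count (frozen_row N K M n a)
      = (\<Sum>w\<in>interlacings (tight_walled N K M (Suc n) a). gt_count (frozen_row N K M (Suc n) w))"
    using assms by (simp add: gt_count_rec interlacings_frozen_row sum.reindex[OF inj])
  also have "\<dots> = (\<Sum>b\<in>interlacings (walled N K M (Suc n) a). gt_count (frozen_row N K M (Suc n) b))"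
    using finite_interlacings interlacings_tight_walled_subset gt_count_frozen_row_loose
    by (intro sum.mono_neutral_left) blast+
  finally show ?thesis ..
qed

primrec wall_chains :: "nat \<Rightarrow> nat \<Rightarrow> nat \<Rightarrow> nat \<Rightarrow> nat \<Rightarrow> int list \<Rightarrow> int list list set" where
  "wall_chains N K M 0 n a = (if a = [] then {[]} else {})"
| "wall_chains N K M (Suc d) n a =
     (\<lambda>(b, cs). b # cs) ` (SIGMA b:interlacings (walled N K M (Suc n) a). wall_chains N K M d (Suc n) b)"

lemma wall_chains_iff:
  "cs \<in> wall_chains N K M d n a \<longleftrightarrow> length cs = d \<and>
     (\<forall>j<d. cs ! j \<in> interlacings (walled N K M (Suc (n + j)) ((a # cs) ! j))) \<and> (a # cs) ! d = []"
proof (induction d arbitrary: n a cs)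
  case (Suc d)
  show ?case
  proof (cases cs)
    case (Cons b cs')
    have "(\<forall>j<Suc d. cs ! j \<in> interlacings (walled N K M (Suc (n + j)) ((a # cs) ! j)))
      \<longleftrightarrow> b \<in> interlacings (walled N K M (Suc n) a)
         \<and> (\<forall>j<d. cs' ! j \<in> interlacings (walled N K M (Suc (Suc n + j)) ((b # cs') ! j)))"
      unfolding Cons All_less_Suc2 by auto
    then show ?thesis using Suc.IH[where n = "Suc n" and a = b and cs = cs'] Cons by auto
  qed auto
qed auto

lemma length_frozen_row_step:
  assumes "length (frozen_row N K M n a) = Suc d" "b \<in> interlacings (walled N K M (Suc n) a)"
  shows "length (frozen_row N K M (Suc n) b) = d"
  using assms(1) length_interlacings[OF assms(2)]
  by (auto simp: frozen_row_def walled_def low_staircase_def high_staircase_def split: if_splits)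

lemma card_wall_chains:
  assumes "length (frozen_row N K M n a) = d"
  shows "finite (wall_chains N K M d n a) \<and> card (wall_chains N K M d n a) = gt_count (frozen_row N K M n a)"
  using assms
proof (induction d arbitrary: n a)
  case 0
  then show ?case by (simp add: frozen_row_def)
next
  case (Suc d n a)
  let ?B = "interlacings (walled N K M (Suc n) a)"
  let ?S = "SIGMA b:?B. wall_chains N K M d (Suc n) b"
  have IH: "finite (wall_chains N K M d (Suc n) b) \<and> card (wall_chains N K M d (Suc n) b) = gt_count (frozen_row N K M (Suc n) b)"
    if "b \<in> ?B" for b
    using Suc.IH[OF length_frozen_row_step[OF Suc.prems that]] .
  have inj: "inj_on (\<lambda>(b, cs). b # cs) ?S" by (rule inj_onI) auto
  have "card (wall_chains N K M (Suc d) n a) = card ?S" by (simp add: card_image[OF inj])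
  also have "\<dots> = (\<Sum>b\<in>?B. gt_count (frozen_row N K M (Suc n) b))"
    using IH finite_interlacings by (simp add: card_SigmaI)
  also have "\<dots> = gt_count (frozen_row N K M n a)"
    using Suc.prems by (intro sum_gt_count_frozen_row) auto
  finally show ?case using IH finite_interlacings by simp
qed

section \<open>Interlacing through counting functions\<close>

definition count_le :: "int list \<Rightarrow> int \<Rightarrow> nat" where
  "count_le xs c = length (filter (\<lambda>t. t \<le> c) xs)"

lemma count_le_le_length: "count_le xs c \<le> length xs"
  by (simp add: count_le_def)

lemma count_le_Nil [simp]: "count_le [] c = 0"
  by (simp add: count_le_def)

lemma count_le_append: "count_le (xs @ ys) c = count_le xs c + count_le ys c"
  by (simp add: count_le_def)

lemma count_le_singleton: "count_le [t] c = of_bool (t \<le> c)"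
  by (simp add: count_le_def)

lemma nth_le_iff_less_count_le:
  assumes sorted: "sorted_wrt (<) x" and i: "i < length x"
  shows "x ! i \<le> c \<longleftrightarrow> i < count_le x c"
proof -
  have count: "count_le x c = card {j. j < length x \<and> x ! j \<le> c}"
    unfolding count_le_def by (rule length_filter_conv_card)
  have mono: "x ! j \<le> x ! k" if "j \<le> k" "k < length x" for j k
    using sorted that by (metis le_less sorted_wrt_iff_nth_less)
  show ?thesis
  proof
    assume "x ! i \<le> c"
    then have "{0..i} \<subseteq> {j. j < length x \<and> x ! j \<le> c}"
      using i mono by fastforce
    then have "card {0..i} \<le> count_le x c" unfolding count by (rule card_mono[rotated]) simp
    then show "i < count_le x c" by simp
  next
    assume less: "i < count_le x c"
    show "x ! i \<le> c"
    proof (rule ccontr)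
      assume "\<not> x ! i \<le> c"
      then have "{j. j < length x \<and> x ! j \<le> c} \<subseteq> {0..<i}"
        using mono by (fastforce simp: not_le)
      then have "count_le x c \<le> i"
        unfolding count by (metis card_atLeastLessThan card_mono diff_zero finite_atLeastLessThan)
      with less show False by simp
    qed
  qed
qed

lemma count_le_nth:
  assumes sorted: "sorted_wrt (<) x" and i: "i < length x"
  shows "count_le x (x ! i) = Suc i"
proof -
  have "i < count_le x (x ! i)" using nth_le_iff_less_count_le[OF sorted i, of "x ! i"] by simp
  moreover have "\<not> Suc i < count_le x (x ! i)" if "Suc i < length x"
  proof -
    have "x ! i < x ! Suc i" using sorted that by (simp add: sorted_wrt_iff_nth_less)
    then show ?thesis using nth_le_iff_less_count_le[OF sorted that, of "x ! i"] by simp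
  qed
  ultimately show ?thesis using count_le_le_length[of x "x ! i"] i by fastforce
qed

lemma interlacings_disjoint:
  assumes sorted: "sorted_wrt (<) x" and y: "y \<in> interlacings x"
  shows "set x \<inter> set y = {}"
proof (rule ccontr)
  have len: "length y + 1 = length x" and between: "\<And>i. i < length y \<Longrightarrow> x ! i < y ! i \<and> y ! i < x ! Suc i"
    using y unfolding interlacings_def by auto
  have mono: "x ! j \<le> x ! k" if "j \<le> k" "k < length x" for j k
    using sorted that by (metis le_less sorted_wrt_iff_nth_less)
  assume "set x \<inter> set y \<noteq> {}"
  then obtain i j where i: "i < length x" and j: "j < length y" and eq: "x ! i = y ! j"
    by (metis disjoint_iff in_set_conv_nth)
  show False
  proof (cases "i \<le> j")
    case True
    then show False using mono[of i j] between[OF j] eq j len by simp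
  next
    case False
    then show False using mono[of "Suc j" i] between[OF j] eq i by simp
  qed
qed

lemma count_le_interlacings:
  assumes sx: "sorted_wrt (<) x" and sy: "sorted_wrt (<) y" and y: "y \<in> interlacings x"
  shows "count_le y c \<le> count_le x c \<and> count_le x c \<le> count_le y c + 1"
proof
  have len: "length y + 1 = length x" and between: "\<And>i. i < length y \<Longrightarrow> x ! i < y ! i \<and> y ! i < x ! Suc i"
    using y unfolding interlacings_def by auto
  show "count_le y c \<le> count_le x c"
  proof (rule ccontr)
    let ?k = "count_le x c"
    assume "\<not> count_le y c \<le> ?k"
    then have k: "?k < count_le y c" and kl: "?k < length y"
      using count_le_le_length[of y c] by simp_all
    then have "x ! ?k \<le> c" using nth_le_iff_less_count_le[OF sy kl, of c] between[OF kl] by simp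
    then show False using nth_le_iff_less_count_le[OF sx, of ?k c] kl len by simp
  qed
  show "count_le x c \<le> count_le y c + 1"
  proof (rule ccontr)
    let ?k = "count_le y c"
    assume "\<not> count_le x c \<le> ?k + 1"
    then have k: "Suc ?k < count_le x c" and kl: "Suc ?k < length x"
      using count_le_le_length[of x c] by simp_all
    have yl: "?k < length y" using kl len by simp
    have "y ! ?k \<le> c" using nth_le_iff_less_count_le[OF sx kl, of c] k between[OF yl] by simp
    then show False using nth_le_iff_less_count_le[OF sy, of ?k c] kl len by simp
  qed
qed

lemma interlacingsI_count_le:
  assumes sx: "sorted_wrt (<) x" and sy: "sorted_wrt (<) y"
    and len: "length y + 1 = length x" and disjoint: "set x \<inter> set y = {}"
    and count: "\<And>c. count_le y c \<le> count_le x c \<and> count_le x c \<le> count_le y c + 1"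
  shows "y \<in> interlacings x"
  unfolding interlacings_def
proof (intro CollectI conjI allI impI)
  fix i assume i: "i < length y"
  have ix: "i < length x" "Suc i < length x" using i len by auto
  have "x ! i \<noteq> y ! i" "x ! Suc i \<noteq> y ! i" using disjoint ix i by (metis disjoint_iff nth_mem)+
  moreover have "i < count_le x (y ! i)" using count[of "y ! i"] count_le_nth[OF sy i] by simp
  then have "x ! i \<le> y ! i" using nth_le_iff_less_count_le[OF sx ix(1)] by simp
  moreover have "i < count_le y (x ! Suc i)" using count[of "x ! Suc i"] count_le_nth[OF sx ix(2)] by simp
  then have "y ! i \<le> x ! Suc i" using nth_le_iff_less_count_le[OF sy i] by simp
  ultimately show "x ! i < y ! i" "y ! i < x ! Suc i" by simp_all
qed (rule len)

lemma interlacings_iff_count_le: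
  assumes "sorted_wrt (<) x" "sorted_wrt (<) y"
  shows "y \<in> interlacings x \<longleftrightarrow> length y + 1 = length x \<and> set x \<inter> set y = {} \<and>
           (\<forall>c. count_le y c \<le> count_le x c \<and> count_le x c \<le> count_le y c + 1)"
  using assms interlacings_disjoint count_le_interlacings interlacingsI_count_le length_interlacings
  by blast

definition count_upto :: "nat set \<Rightarrow> nat \<Rightarrow> nat" where
  "count_upto S m = card {m' \<in> S. m' \<le> m}"

lemma count_le_eq_count_upto:
  assumes "distinct xs" "set xs = int ` S"
  shows "count_le xs c = (if c < 0 then 0 else count_upto S (nat c))"
proof -
  have "count_le xs c = card ({t. t \<le> c} \<inter> int ` S)"
    unfolding count_le_def using assms by (simp add: distinct_length_filter)
  also have "{t. t \<le> c} \<inter> int ` S = int ` {m' \<in> S. int m' \<le> c}" by auto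
  also have "card \<dots> = card {m' \<in> S. int m' \<le> c}" by (rule card_image) (simp add: inj_on_def)
  also have "\<dots> = (if c < 0 then 0 else count_upto S (nat c))"
    unfolding count_upto_def by (cases "c < 0") (auto intro!: arg_cong[where f = card])
  finally show ?thesis .
qed

lemma count_upto_0: "\<forall>m\<in>S. 1 \<le> m \<Longrightarrow> count_upto S 0 = 0"
  unfolding count_upto_def by (auto intro!: arg_cong[where f = card])

lemma count_upto_Suc: "count_upto S (Suc m) = count_upto S m + of_bool (Suc m \<in> S)"
proof -
  have "finite {m' \<in> S. m' \<le> m}" by (rule finite_subset[of _ "{..m}"]) auto
  moreover have "{m' \<in> S. m' \<le> Suc m} = (if Suc m \<in> S then insert (Suc m) {m' \<in> S. m' \<le> m} else {m' \<in> S. m' \<le> m})"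
    by (auto simp: le_Suc_eq)
  ultimately show ?thesis unfolding count_upto_def by auto
qed

lemma count_upto_ge: "S \<subseteq> {1..M} \<Longrightarrow> M \<le> m \<Longrightarrow> count_upto S m = card S"
  unfolding count_upto_def by (auto intro!: arg_cong[where f = card])

text \<open>The number of thick vertical edges of column \<open>n\<close> between rows \<open>m\<close> and \<open>m + 1\<close>, when \<open>A\<close> and \<open>B\<close> are the
  rows of the thick horizontal edges west and east of the column; a path enters from the south iff
  \<open>n \<le> N\<close>.\<close>

definition vflux :: "nat \<Rightarrow> nat \<Rightarrow> nat set \<Rightarrow> nat set \<Rightarrow> nat \<Rightarrow> int" where
  "vflux N n A B m = of_bool (n \<le> N) + int (count_upto A m) - int (count_upto B m)"

lemma vflux_0: "\<forall>m\<in>A. 1 \<le> m \<Longrightarrow> \<forall>m\<in>B. 1 \<le> m \<Longrightarrow> vflux N n A B 0 = of_bool (n \<le> N)"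
  by (simp add: vflux_def count_upto_0)

lemma vflux_Suc: "vflux N n A B (Suc m) = vflux N n A B m + of_bool (Suc m \<in> A) - of_bool (Suc m \<in> B)"
  by (simp add: vflux_def count_upto_Suc)

lemma count_le_walled_diff:
  assumes A: "A \<subseteq> {1..M}" and B: "B \<subseteq> {1..M}"
    and a: "sorted_wrt (<) a" "set a = int ` A" and b: "sorted_wrt (<) b" "set b = int ` B"
  shows "int (count_le (walled N K M n a) c) - int (count_le b c)
       = (if c < 0 then 0 else if c \<le> int M then vflux N n A B (nat c) else vflux N n A B M + of_bool (n \<le> K))"
proof -
  have ca: "count_le a c = (if c < 0 then 0 else count_upto A (nat c))"
    using a by (intro count_le_eq_count_upto) (auto simp: strict_sorted_iff)
  have cb: "count_le b c = (if c < 0 then 0 else count_upto B (nat c))"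
    using b by (intro count_le_eq_count_upto) (auto simp: strict_sorted_iff)
  have "count_upto A (nat c) = count_upto A M" "count_upto B (nat c) = count_upto B M" if "int M < c"
    using that count_upto_ge[OF A] count_upto_ge[OF B] by simp_all
  then show ?thesis
    by (simp add: walled_def count_le_append count_le_singleton ca cb vflux_def)
qed

lemma count_le_eq_length: "\<forall>t\<in>set xs. t \<le> c \<Longrightarrow> count_le xs c = length xs"
  by (simp add: count_le_def)

lemma walled_interlacing_iff:
  assumes A: "A \<subseteq> {1..M}" and B: "B \<subseteq> {1..M}"
    and a: "sorted_wrt (<) a" "set a = int ` A" and b: "sorted_wrt (<) b" "set b = int ` B"
  shows "b \<in> interlacings (walled N K M n a) \<longleftrightarrow>
    A \<inter> B = {} \<and> vflux N n A B M = of_bool (K < n) \<and> (\<forall>m\<le>M. vflux N n A B m \<in> {0, 1})"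
proof -
  let ?x = "walled N K M n a"
  note diff = count_le_walled_diff[OF assms, where N = N and K = K and n = n]
  have sorted: "sorted_wrt (<) ?x"
    using a A unfolding walled_def by (fastforce simp: sorted_wrt_append)
  have "\<forall>t\<in>set ?x. t \<le> int M + 1" "\<forall>t\<in>set b. t \<le> int M + 1"
    using a b A B by (auto simp: walled_def)
  then have "int (length ?x) - int (length b) = vflux N n A B M + of_bool (n \<le> K)"
    using diff[where c = "int M + 1"] by (simp add: count_le_eq_length)
  then have len: "length b + 1 = length ?x \<longleftrightarrow> vflux N n A B M = of_bool (K < n)"
    by auto
  have disjoint: "set ?x \<inter> set b = {} \<longleftrightarrow> A \<inter> B = {}"
    using a(2) b(2) B by (auto simp: walled_def)
  have count: "(\<forall>c. count_le b c \<le> count_le ?x c \<and> count_le ?x c \<le> count_le b c + 1)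
      \<longleftrightarrow> (\<forall>m\<le>M. vflux N n A B m \<in> {0, 1})"
    if "vflux N n A B M = of_bool (K < n)"
  proof -
    have "(count_le b c \<le> count_le ?x c \<and> count_le ?x c \<le> count_le b c + 1)
        \<longleftrightarrow> int (count_le ?x c) - int (count_le b c) \<in> {0, 1}" for c
      by auto
    moreover have "(\<forall>c. int (count_le ?x c) - int (count_le b c) \<in> {0, 1}) \<longleftrightarrow> (\<forall>m\<le>M. vflux N n A B m \<in> {0, 1})"
    proof
      assume "\<forall>c. int (count_le ?x c) - int (count_le b c) \<in> {0, 1}"
      then show "\<forall>m\<le>M. vflux N n A B m \<in> {0, 1}"
        using diff by (metis nat_int of_nat_0_le_iff of_nat_le_iff not_less)
    next
      assume "\<forall>m\<le>M. vflux N n A B m \<in> {0, 1}"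
      then show "\<forall>c. int (count_le ?x c) - int (count_le b c) \<in> {0, 1}"
        using that diff by (auto simp: nat_le_iff)
    qed
    ultimately show ?thesis by presburger
  qed
  show ?thesis
    using interlacings_iff_count_le[OF sorted b(1)] len disjoint count by blast
qed

section \<open>Configurations as chains of interlacing rows\<close>

lemma allowed_vertex_iff_flux:
  "allowed_vertex S N W E \<longleftrightarrow> \<not> (W \<and> E) \<and> (of_bool N :: int) = of_bool S + of_bool W - of_bool E"
  unfolding allowed_vertex_def by (cases S; cases N; cases W; cases E) auto

lemma four_vertex_configsD:
  assumes "(v, h) \<in> four_vertex_configs (N + K) M N"
  shows "v n m \<Longrightarrow> 1 \<le> n \<and> n \<le> N + K \<and> m \<le> M"
    and "h n m \<Longrightarrow> n \<le> N + K \<and> 1 \<le> m \<and> m \<le> M"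
    and "1 \<le> n \<Longrightarrow> n \<le> N + K \<Longrightarrow> 1 \<le> m \<Longrightarrow> m \<le> M \<Longrightarrow>
           allowed_vertex (v n (m - 1)) (v n m) (h (n - 1) m) (h n m)"
    and "1 \<le> n \<Longrightarrow> n \<le> N + K \<Longrightarrow> v n 0 \<longleftrightarrow> n \<le> N"
    and "1 \<le> n \<Longrightarrow> n \<le> N + K \<Longrightarrow> v n M \<longleftrightarrow> K < n"
    and "\<not> h 0 m" and "\<not> h (N + K) m"
  using assms unfolding four_vertex_configs_def by auto

lemma vertical_edge_flux:
  assumes cfg: "(v, h) \<in> four_vertex_configs (N + K) M N"
    and n: "1 \<le> n" "n \<le> N + K" and m: "m \<le> M"
  shows "of_bool (v n m) = vflux N n {m. h (n - 1) m} {m. h n m} m"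
  using m
proof (induction m)
  case 0
  then show ?case using four_vertex_configsD(2,4)[OF cfg] n by (subst vflux_0) auto
next
  case (Suc m)
  then have "allowed_vertex (v n m) (v n (Suc m)) (h (n - 1) (Suc m)) (h n (Suc m))"
    using four_vertex_configsD(3)[OF cfg n, of "Suc m"] by simp
  then show ?case using Suc by (simp add: allowed_vertex_iff_flux vflux_Suc)
qed

definition thick_rows :: "(nat \<Rightarrow> nat \<Rightarrow> bool) \<Rightarrow> nat \<Rightarrow> int list" where
  "thick_rows h n = sorted_list_of_set (int ` {m. h n m})"

lemma sorted_thick_rows: "sorted_wrt (<) (thick_rows h n)"
  unfolding thick_rows_def by (rule strict_sorted_list_of_set)

lemma set_thick_rows: "finite {m. h n m} \<Longrightarrow> set (thick_rows h n) = int ` {m. h n m}"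
  unfolding thick_rows_def by simp

lemma thick_rows_interlace:
  assumes cfg: "(v, h) \<in> four_vertex_configs (N + K) M N" and n: "1 \<le> n" "n \<le> N + K"
  shows "thick_rows h n \<in> interlacings (walled N K M n (thick_rows h (n - 1)))"
proof -
  let ?A = "{m. h (n - 1) m}" and ?B = "{m. h n m}"
  have A: "?A \<subseteq> {1..M}" and B: "?B \<subseteq> {1..M}" using four_vertex_configsD(2)[OF cfg] by auto
  have "?A \<inter> ?B = {}"
  proof -
    have False if "h (n - 1) m" "h n m" for m
      using that four_vertex_configsD(2)[OF cfg, of n m] four_vertex_configsD(3)[OF cfg n, of m]
      by (simp add: allowed_vertex_iff_flux)
    then show ?thesis by blast
  qed
  moreover have "vflux N n ?A ?B m \<in> {0, 1}" if "m \<le> M" for m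
    using vertical_edge_flux[OF cfg n that] by (cases "v n m") auto
  moreover have "vflux N n ?A ?B M = of_bool (K < n)"
    using vertical_edge_flux[OF cfg n order_refl] four_vertex_configsD(5)[OF cfg n] by simp
  moreover have "finite ?A" "finite ?B" using A B finite_subset by auto
  ultimately show ?thesis
    by (subst walled_interlacing_iff[OF A B]) (simp_all add: sorted_thick_rows set_thick_rows)
qed

definition column_sequence :: "nat \<Rightarrow> (nat \<Rightarrow> nat \<Rightarrow> bool) \<Rightarrow> int list list" where
  "column_sequence L h = map (thick_rows h) [1..<Suc L]"

lemma length_column_sequence [simp]: "length (column_sequence L h) = L"
  by (simp add: column_sequence_def)

lemma nth_column_sequence: "j < L \<Longrightarrow> column_sequence L h ! j = thick_rows h (Suc j)"
  unfolding column_sequence_def by (simp del: upt_Suc add: nth_upt)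

lemma thick_rows_empty: "(\<And>m. \<not> h n m) \<Longrightarrow> thick_rows h n = []"
  by (simp add: thick_rows_def)

lemma column_sequence_in_wall_chains:
  assumes cfg: "(v, h) \<in> four_vertex_configs (N + K) M N"
  shows "column_sequence (N + K) h \<in> wall_chains N K M (N + K) 0 []"
  unfolding wall_chains_iff
proof (intro conjI allI impI)
  have row: "([] # column_sequence (N + K) h) ! j = thick_rows h j" if "j \<le> N + K" for j
    using that thick_rows_empty[of h 0] four_vertex_configsD(6)[OF cfg] nth_column_sequence[of _ "N + K" h]
    by (cases j) auto
  then show "([] # column_sequence (N + K) h) ! (N + K) = []"
    using thick_rows_empty[of h "N + K"] four_vertex_configsD(7)[OF cfg] by simp
  fix j assume j: "j < N + K"
  then show "column_sequence (N + K) h ! j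
      \<in> interlacings (walled N K M (Suc (0 + j)) (([] # column_sequence (N + K) h) ! j))"
    using row[of j] nth_column_sequence[OF j] thick_rows_interlace[OF cfg, of "Suc j"] by simp
qed simp

lemma column_sequence_inj:
  assumes c1: "(v, h) \<in> four_vertex_configs (N + K) M N" and c2: "(v', h') \<in> four_vertex_configs (N + K) M N"
    and eq: "column_sequence (N + K) h = column_sequence (N + K) h'"
  shows "(v, h) = (v', h')"
proof -
  have "h n m = h' n m" for n m
  proof (cases "1 \<le> n \<and> n \<le> N + K")
    case True
    then obtain j where j: "j < N + K" "n = Suc j" by (cases n) auto
    then have "thick_rows h n = thick_rows h' n"
      using eq nth_column_sequence[OF j(1), of h] nth_column_sequence[OF j(1), of h'] by simp
    moreover have "finite {m. h n m}" "finite {m. h' n m}"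
      using four_vertex_configsD(2)[OF c1, of n] four_vertex_configsD(2)[OF c2, of n]
      by (auto intro: finite_subset[of _ "{1..M}"])
    ultimately have "int ` {m. h n m} = int ` {m. h' n m}" by (metis set_thick_rows)
    then have "{m. h n m} = {m. h' n m}" by (simp add: inj_image_eq_iff)
    then show ?thesis by blast
  next
    case False
    then have "n = 0 \<or> N + K < n" by auto
    then show ?thesis
      using four_vertex_configsD(2)[OF c1, of n m] four_vertex_configsD(2)[OF c2, of n m]
        four_vertex_configsD(6)[OF c1, of m] four_vertex_configsD(6)[OF c2, of m] by auto
  qed
  then have h: "h = h'" by (intro ext)
  have "v n m = v' n m" for n m
  proof (cases "1 \<le> n \<and> n \<le> N + K \<and> m \<le> M")
    case True
    then have "(of_bool (v n m) :: int) = of_bool (v' n m)"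
      using vertical_edge_flux[OF c1, of n m] vertical_edge_flux[OF c2, of n m] h by simp
    then show ?thesis by (cases "v n m"; cases "v' n m") auto
  next
    case False
    then show ?thesis using four_vertex_configsD(1)[OF c1, of n m] four_vertex_configsD(1)[OF c2, of n m] by auto
  qed
  then show ?thesis using h by auto
qed

lemma interlacings_bounds:
  assumes "y \<in> interlacings x" "\<forall>t\<in>set x. 0 \<le> t \<and> t \<le> int M + 1"
  shows "\<forall>t\<in>set y. 1 \<le> t \<and> t \<le> int M"
proof
  fix t assume "t \<in> set y"
  then obtain i where i: "i < length y" and t: "t = y ! i" by (auto simp: in_set_conv_nth)
  have "x ! i < y ! i" "y ! i < x ! Suc i" "x ! i \<in> set x" "x ! Suc i \<in> set x"
    using assms(1) i unfolding interlacings_def by auto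
  then show "1 \<le> t \<and> t \<le> int M" using assms(2) t by fastforce
qed

text \<open>The inverse encoding: the thick horizontal edges east of column \<open>n\<close> lie in the rows of the
  \<open>n\<close>-th entry of the chain, and the vertical edges are forced by flux conservation.\<close>

definition chain_rows :: "nat \<Rightarrow> int list list \<Rightarrow> nat \<Rightarrow> nat \<Rightarrow> bool" where
  "chain_rows L cs n m \<longleftrightarrow> n \<le> L \<and> int m \<in> set (([] # cs) ! n)"

definition flux_edges :: "nat \<Rightarrow> nat \<Rightarrow> nat \<Rightarrow> (nat \<Rightarrow> nat \<Rightarrow> bool) \<Rightarrow> nat \<Rightarrow> nat \<Rightarrow> bool" where
  "flux_edges L M N h n m \<longleftrightarrow> 1 \<le> n \<and> n \<le> L \<and> m \<le> M \<and> vflux N n {m. h (n - 1) m} {m. h n m} m = 1"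

lemma wall_chain_rows_bounded:
  assumes cs: "cs \<in> wall_chains N K M (N + K) 0 []" and n: "n \<le> N + K"
  shows "sorted_wrt (<) (([] # cs) ! n) \<and> (\<forall>t\<in>set (([] # cs) ! n). 1 \<le> t \<and> t \<le> int M)"
  using n
proof (induction n)
  case (Suc n)
  then have step: "([] # cs) ! Suc n \<in> interlacings (walled N K M (Suc n) (([] # cs) ! n))"
    using cs unfolding wall_chains_iff by simp
  have "\<forall>t\<in>set (walled N K M (Suc n) (([] # cs) ! n)). 0 \<le> t \<and> t \<le> int M + 1"
    using Suc by (fastforce simp: walled_def)
  from interlacings_bounds[OF step this] show ?case using interlacings_sorted[OF step] by simp
qed simp

lemma set_wall_chain_row:
  assumes "cs \<in> wall_chains N K M (N + K) 0 []" and "n \<le> N + K"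
  shows "set (([] # cs) ! n) = int ` {m. chain_rows (N + K) cs n m}"
    and "{m. chain_rows (N + K) cs n m} \<subseteq> {1..M}"
  using wall_chain_rows_bounded[OF assms] assms(2) unfolding chain_rows_def
  by (force simp: image_iff intro: exI[of _ "nat _"])+

lemma wall_chain_column:
  assumes cs: "cs \<in> wall_chains N K M (N + K) 0 []" and n: "1 \<le> n" "n \<le> N + K"
  defines "A \<equiv> {m. chain_rows (N + K) cs (n - 1) m}" and "B \<equiv> {m. chain_rows (N + K) cs n m}"
  shows "A \<inter> B = {} \<and> vflux N n A B M = of_bool (K < n) \<and> (\<forall>m\<le>M. vflux N n A B m \<in> {0, 1})"
proof -
  have step: "([] # cs) ! n \<in> interlacings (walled N K M n (([] # cs) ! (n - 1)))"
    using cs n unfolding wall_chains_iff by (cases n) auto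
  have sorted: "sorted_wrt (<) (([] # cs) ! (n - 1))" "sorted_wrt (<) (([] # cs) ! n)"
    using wall_chain_rows_bounded[OF cs, of "n - 1"] wall_chain_rows_bounded[OF cs, of n] n by simp_all
  have rows: "A \<subseteq> {1..M}" "B \<subseteq> {1..M}" "set (([] # cs) ! (n - 1)) = int ` A" "set (([] # cs) ! n) = int ` B"
    using set_wall_chain_row[OF cs, of "n - 1"] set_wall_chain_row[OF cs, of n] n unfolding A_def B_def by auto
  show ?thesis
    using walled_interlacing_iff[OF rows(1,2) sorted(1) rows(3) sorted(2) rows(4)] step by blast
qed

lemma config_of_wall_chain:
  assumes cs: "cs \<in> wall_chains N K M (N + K) 0 []"
  defines "h \<equiv> chain_rows (N + K) cs"
  shows "(flux_edges (N + K) M N h, h) \<in> four_vertex_configs (N + K) M N"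
proof -
  let ?v = "flux_edges (N + K) M N h"
  have rows: "{m. h n m} \<subseteq> {1..M}" for n
    unfolding h_def using set_wall_chain_row(2)[OF cs] by (cases "n \<le> N + K") (auto simp: chain_rows_def)
  have column: "{m. h (n - 1) m} \<inter> {m. h n m} = {} \<and> vflux N n {m. h (n - 1) m} {m. h n m} M = of_bool (K < n)
      \<and> (\<forall>m\<le>M. vflux N n {m. h (n - 1) m} {m. h n m} m \<in> {0, 1})" if "1 \<le> n" "n \<le> N + K" for n
    unfolding h_def by (rule wall_chain_column[OF cs that])
  have flux: "of_bool (?v n m) = vflux N n {m. h (n - 1) m} {m. h n m} m" if "1 \<le> n" "n \<le> N + K" "m \<le> M" for n m
    using column[OF that(1,2)] that by (auto simp: flux_edges_def)
  have ends: "\<not> h 0 m" "\<not> h (N + K) m" for m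
    using cs unfolding h_def chain_rows_def wall_chains_iff by auto
  have "allowed_vertex (?v n (m - 1)) (?v n m) (h (n - 1) m) (h n m)"
    if "1 \<le> n" "n \<le> N + K" "1 \<le> m" "m \<le> M" for n m
    using flux[OF that(1,2), of m] flux[OF that(1,2), of "m - 1"] column[OF that(1,2)] that vflux_Suc[of N n _ _ "m - 1"]
    by (cases m) (auto simp: allowed_vertex_iff_flux)
  moreover have "?v n 0 \<longleftrightarrow> n \<le> N" if "1 \<le> n" "n \<le> N + K" for n
    using flux[OF that, of 0] vflux_0[of "{m. h (n - 1) m}" "{m. h n m}" N n] rows by (cases "?v n 0") force+
  moreover have "?v n M \<longleftrightarrow> K < n" if "1 \<le> n" "n \<le> N + K" for n
    using flux[OF that, of M] column[OF that] by (cases "?v n M") auto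
  moreover have "?v n m \<Longrightarrow> 1 \<le> n \<and> n \<le> N + K \<and> m \<le> M" for n m
    by (simp add: flux_edges_def)
  moreover have "h n m \<Longrightarrow> n \<le> N + K \<and> 1 \<le> m \<and> m \<le> M" for n m
    using rows[of n] by (auto simp: h_def chain_rows_def)
  ultimately show ?thesis
    unfolding four_vertex_configs_def using ends by auto
qed

lemma column_sequence_chain_rows:
  assumes cs: "cs \<in> wall_chains N K M (N + K) 0 []"
  shows "column_sequence (N + K) (chain_rows (N + K) cs) = cs"
proof (rule nth_equalityI)
  show "length (column_sequence (N + K) (chain_rows (N + K) cs)) = length cs"
    using cs by (simp add: wall_chains_iff)
  fix j assume "j < length (column_sequence (N + K) (chain_rows (N + K) cs))"
  then have j: "j < N + K" by simp
  have "finite {m. chain_rows (N + K) cs (Suc j) m}"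
    using set_wall_chain_row(2)[OF cs, of "Suc j"] j finite_subset by auto
  then have "set (thick_rows (chain_rows (N + K) cs) (Suc j)) = set (cs ! j)"
    using set_wall_chain_row(1)[OF cs, of "Suc j"] j by (simp add: set_thick_rows)
  moreover have "sorted_wrt (<) (cs ! j)" using wall_chain_rows_bounded[OF cs, of "Suc j"] j by simp
  ultimately show "column_sequence (N + K) (chain_rows (N + K) cs) ! j = cs ! j"
    unfolding nth_column_sequence[OF j] using sorted_thick_rows by (intro strict_sorted_equal)
qed

lemma bij_betw_column_sequence:
  "bij_betw (\<lambda>(v, h). column_sequence (N + K) h) (four_vertex_configs (N + K) M N) (wall_chains N K M (N + K) 0 [])"
proof (rule bij_betwI')
  fix c c' assume "c \<in> four_vertex_configs (N + K) M N" "c' \<in> four_vertex_configs (N + K) M N"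
  moreover obtain v h v' h' where "c = (v, h)" "c' = (v', h')" by (cases c, cases c')
  ultimately show "((\<lambda>(v, h). column_sequence (N + K) h) c = (\<lambda>(v, h). column_sequence (N + K) h) c') = (c = c')"
    using column_sequence_inj[of v h N K M v' h'] by auto
next
  fix c assume "c \<in> four_vertex_configs (N + K) M N"
  then show "(\<lambda>(v, h). column_sequence (N + K) h) c \<in> wall_chains N K M (N + K) 0 []"
    using column_sequence_in_wall_chains by (cases c) simp
next
  fix cs assume cs: "cs \<in> wall_chains N K M (N + K) 0 []"
  let ?h = "chain_rows (N + K) cs"
  show "\<exists>c\<in>four_vertex_configs (N + K) M N. cs = (\<lambda>(v, h). column_sequence (N + K) h) c"
  proof
    show "cs = (\<lambda>(v, h). column_sequence (N + K) h) (flux_edges (N + K) M N ?h, ?h)"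
      using column_sequence_chain_rows[OF cs] by simp
  qed (rule config_of_wall_chain[OF cs])
qed

section \<open>Evaluation of the product\<close>

lemma PL_eq_prod: "PL r s t = (\<Prod>i=1..r. \<Prod>j=1..s. real (i + j + t - 1) / real (i + j - 1))"
  unfolding PL_def
proof (intro prod.cong refl)
  fix i j assume "i \<in> {1..r}" "j \<in> {1..s}"
  then have "(\<Prod>k=Suc 0..t. real (i + j + k - 1) / real (i + j + (k - 1) - 1)) = real (i + j + t - 1) / real (i + j + 0 - 1)"
    by (intro prod_telescope'') auto
  moreover have "real (i + j + (k - 1) - 1) = real (i + j + k - 2)" if "k \<in> {1..t}" for k
    using that by simp
  ultimately show "(\<Prod>k=1..t. real (i + j + k - 1) / real (i + j + k - 2)) = real (i + j + t - 1) / real (i + j - 1)"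
    by simp
qed

lemma fact_add_eq_prod: "fact (a + n) = (fact a :: real) * (\<Prod>q=1..n. real (a + q))"
proof (induction n)
  case (Suc n)
  have "fact (a + Suc n) = (fact (a + n) :: real) * real (a + Suc n)" by (simp add: algebra_simps)
  then show ?case using Suc by (simp add: prod.nat_ivl_Suc' algebra_simps)
qed simp

lemma prod_fact_ratio_eq_PL:
  assumes "N < L" "L \<le> M"
  shows "(\<Prod>j=1..N. (fact (j - 1) * fact (M - N + j)) / (fact (L - N + j - 1) * fact (M - L + j) :: real))
       = PL N (L - N) (M - L + 1)"
  unfolding PL_eq_prod
proof (intro prod.cong refl)
  fix j assume j: "j \<in> {1..N}"
  have "fact (M - N + j) = (fact (M - L + j) :: real) * (\<Prod>q=1..L - N. real (M - L + j + q))"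
    using fact_add_eq_prod[of "M - L + j" "L - N"] assms by (simp add: algebra_simps)
  moreover have "fact (L - N + j - 1) = (fact (j - 1) :: real) * (\<Prod>q=1..L - N. real (j - 1 + q))"
    using fact_add_eq_prod[of "j - 1" "L - N"] assms j by (simp add: algebra_simps)
  ultimately have "(fact (j - 1) * fact (M - N + j)) / (fact (L - N + j - 1) * fact (M - L + j) :: real)
      = (\<Prod>q=1..L - N. real (M - L + j + q) / real (j - 1 + q))"
    by (simp add: prod_dividef)
  also have "\<dots> = (\<Prod>q=1..L - N. real (j + q + (M - L + 1) - 1) / real (j + q - 1))"
    using j assms by (intro prod.cong refl) (auto simp: algebra_simps)
  finally show "(fact (j - 1) * fact (M - N + j)) / (fact (L - N + j - 1) * fact (M - L + j) :: real)
      = (\<Prod>q=1..L - N. real (j + q + (M - L + 1) - 1) / real (j + q - 1))" .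
qed

lemma prod_lessThan_add:
  fixes a b :: nat
  shows "(\<Prod>k<a + b. f k) = (\<Prod>k<a. f k) * (\<Prod>p<b. f (a + p))"
  by (induction b) (simp_all add: mult.assoc)

lemma prod_lessThan_diff_eq_fact: "(\<Prod>k<i. real (i - k)) = fact i"
proof (induction i)
  case (Suc i)
  have "(\<Prod>k<Suc i. real (Suc i - k)) = real (Suc i) * (\<Prod>k<i. real (i - k))"
    by (subst prod.lessThan_Suc_shift) simp
  then show ?case using Suc by (simp add: algebra_simps)
qed simp

lemma frozen_top_row:
  "length (frozen_row N K M 0 []) = N + K"
  "i < N \<Longrightarrow> frozen_row N K M 0 [] ! i = 2 * int i - int N + 1"
  "q < K \<Longrightarrow> frozen_row N K M 0 [] ! (N + q) = int M - int K + 2 + 2 * int q"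
  by (simp_all add: frozen_row_def low_staircase_def high_staircase_def nth_append)

lemma sorted_frozen_top_row:
  assumes "N + K \<le> M"
  shows "sorted_wrt (<) (frozen_row N K M 0 [])"
proof -
  have "sorted_wrt (<) (low_staircase N)" "sorted_wrt (<) (high_staircase M K)"
    by (auto simp: low_staircase_def high_staircase_def sorted_wrt_map sorted_wrt_iff_nth_less)
  moreover have "\<forall>s\<in>set (low_staircase N). \<forall>t\<in>set (high_staircase M K). s < t"
    using assms by (auto simp: low_staircase_def high_staircase_def)
  ultimately show ?thesis by (simp add: frozen_row_def sorted_wrt_append)
qed

lemma gt_count_frozen_top_row:
  assumes "N + K \<le> M"
  shows "real (gt_count (frozen_row N K M 0 []))
       = (\<Prod>q<K. (\<Prod>k<N. real M - real K + 1 + real q - real k) / (\<Prod>i=1..N. real (q + i)))"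
proof -
  let ?x = "frozen_row N K M 0 []"
  define X where "X i = ?x ! i - int i" for i
  define Y :: "nat \<Rightarrow> real" where "Y i = (\<Prod>k<i. of_int (X i - X k))" for i
  define P where "P q = (\<Prod>k<N. real M - real K + 1 + real q - real k)" for q
  have low: "X i = int i - int N + 1" if "i < N" for i
    using frozen_top_row(2)[OF that] by (simp add: X_def)
  have high: "X (N + q) = int M - int K - int N + 2 + int q" if "q < K" for q
    using frozen_top_row(3)[OF that] by (simp add: X_def)
  have "Y i = fact i" if "i < N" for i
  proof -
    have "Y i = (\<Prod>k<i. real (i - k))"
      unfolding Y_def using that low by (intro prod.cong refl) (auto simp: of_nat_diff)
    then show ?thesis using prod_lessThan_diff_eq_fact[of i] by simp
  qed
  moreover have "Y (N + q) = P q * fact q" if "q < K" for q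
  proof -
    have "(\<Prod>k<N. (of_int (X (N + q) - X k) :: real)) = P q"
      unfolding P_def using that low high by (intro prod.cong refl) auto
    moreover have "(\<Prod>p<q. (of_int (X (N + q) - X (N + p)) :: real)) = (\<Prod>p<q. real (q - p))"
      using that high by (intro prod.cong refl) (auto simp: of_nat_diff)
    ultimately show ?thesis
      unfolding Y_def prod_lessThan_add using prod_lessThan_diff_eq_fact[of q] by simp
  qed
  ultimately have "(\<Prod>i<N + K. Y i) = (\<Prod>i<N. fact i) * (\<Prod>q<K. P q * fact q)"
    unfolding prod_lessThan_add by simp
  moreover have "(\<Prod>j<N + K. (fact j :: real)) = (\<Prod>i<N. fact i) * (\<Prod>q<K. fact q * (\<Prod>i=1..N. real (q + i)))"
    unfolding prod_lessThan_add using fact_add_eq_prod by (simp add: add.commute)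
  moreover have "real (gt_count ?x) = (\<Prod>i<N + K. Y i) / (\<Prod>j<N + K. fact j)"
    using gt_count_formula[OF sorted_frozen_top_row[OF assms]] by (simp add: frozen_top_row(1) Y_def X_def)
  ultimately show ?thesis
    unfolding P_def by (simp add: prod_dividef[symmetric])
qed

lemma frozen_product_eq_PL:
  assumes "N + K \<le> M"
  shows "(\<Prod>q<K. (\<Prod>k<N. real M - real K + 1 + real q - real k) / (\<Prod>i=1..N. real (q + i)))
       = PL N K (M - (N + K) + 1)"
proof -
  let ?T = "M - (N + K) + 1"
  have "(\<Prod>k<N. real M - real K + 1 + real q - real k) = (\<Prod>i=1..N. real (i + Suc q + ?T - 1))" for q
    by (rule prod.reindex_bij_witness[where i = "\<lambda>i. N - i" and j = "\<lambda>k. N - k"])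
      (use assms in \<open>auto simp: of_nat_diff\<close>)
  then have "(\<Prod>q<K. (\<Prod>k<N. real M - real K + 1 + real q - real k) / (\<Prod>i=1..N. real (q + i)))
      = (\<Prod>q<K. \<Prod>i=1..N. real (i + Suc q + ?T - 1) / real (i + Suc q - 1))"
    by (simp add: prod_dividef add.commute)
  also have "\<dots> = (\<Prod>j=1..K. \<Prod>i=1..N. real (i + j + ?T - 1) / real (i + j - 1))"
    by (rule prod.reindex_bij_witness[where i = "\<lambda>j. j - 1" and j = Suc]) auto
  also have "\<dots> = PL N K ?T"
    unfolding PL_eq_prod by (rule prod.swap)
  finally show ?thesis .
qed

theorem mainTheorem2:
  fixes L M N :: nat
  assumes "1 \<le> N" and "N < L" and "L \<le> M"
  shows "real (Z4v L M N) =
           (\<Prod>j=1..N. (fact (j - 1) * fact (M - N + j)) /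
                        (fact (L - N + j - 1) * fact (M - L + j) :: real))
       \<and> real (Z4v L M N) = PL N (L - N) (M - L + 1)"
proof -
  define K where "K = L - N"
  have L: "L = N + K" and "N + K \<le> M" using assms by (simp_all add: K_def)
  have "Z4v L M N = card (wall_chains N K M (N + K) 0 [])"
    unfolding Z4v_def L by (rule bij_betw_same_card[OF bij_betw_column_sequence])
  also have "\<dots> = gt_count (frozen_row N K M 0 [])"
    using card_wall_chains[of N K M 0 "[]"] by (simp add: frozen_top_row(1))
  also have "real \<dots> = PL N K (M - (N + K) + 1)"
    using gt_count_frozen_top_row[OF \<open>N + K \<le> M\<close>] frozen_product_eq_PL[OF \<open>N + K \<le> M\<close>] by simp
  finally have "real (Z4v L M N) = PL N (L - N) (M - L + 1)"
    unfolding L by simp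
  with prod_fact_ratio_eq_PL[OF assms(2,3)] show ?thesis by simp
qed

end
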